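(* Let $V$ be a finite-dimensional super vector space over a field of characteristic $0$. For a Dirac structure $L\subseteq\mathcal{E}=\mathfrak{gl}(V)\oplus V$, let $W_L=\{x\in V:\ A+x\in L\text{ for some }A\in\mathfrak{gl}(V)\}$ and define $[x,y]_L=A(y)$ for $x,y\in W_L$, where $A$ is any element with $A+x\in L$. Then $[\cdot,\cdot]_L$ is well defined, takes values in $W_L$, and makes $W_L$ a Lie superalgebra; moreover the assignment $L\mapsto(W_L,[\cdot,\cdot]_L)$ is a bijection between the set of Dirac structures of the omni-Lie superalgebra $(\mathcal{E},[\![\cdot,\cdot]\!],\langle\cdot,\cdot\rangle)$ and the set of pairs $(W,[\cdot,\cdot]_W)$ with $W$ a graded subspace of $V$ and $[\cdot,\cdot]_W$ a Lie superalgebra structure on $W$. The inverse sends $(W,[\cdot,\cdot]_W)$ to $\{A+x:\ x\in W,\ A\in\mathfrak{gl}(V),\ A(y)=[x,y]_W\ \forall y\in W\}$.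
   Context: $\mathfrak{gl}(V)$: linear endomorphisms of $V$ with natural $\mathbb{Z}_2$-grading and supercommutator $[A,B]=AB-(-1)^{|A||B|}BA$. $\mathcal{E}=\mathfrak{gl}(V)\oplus V$ graded by $\mathcal{E}_\alpha=\mathfrak{gl}(V)_\alpha\oplus V_\alpha$, homogeneous elements $A+x$ with $|A|=|x|$. Bracket: $[\![A+x,B+y]\!]=[A,B]+\tfrac12(Ay-(-1)^{|x||y|}Bx)$; $V$-valued pairing: $\langle A+x,B+y\rangle=\tfrac12(Ay+(-1)^{|x||y|}Bx)$. $F^\perp=\{e:\langle e,f\rangle=0\ \forall f\in F\}$. A Dirac structure is a graded subspace $L\subseteq\mathcal{E}$ with $L=L^\perp$ and $[\![L,L]\!]\subseteq L$. A Lie superalgebra is a super vector space with bilinear bracket satisfying $[L_\alpha,L_\beta]\subseteq L_{\alpha+\beta}$, $[x,y]=-(-1)^{|x||y|}[y,x]$, and $[x,[y,z]]=[[x,y],z]+(-1)^{|x||y|}[y,[x,z]]$. *)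

theory Defs
  imports Complex_Main
begin

text \<open>Parities are booleans: False = even (0), True = odd (1); addition in Z2 is (\<noteq>).\<close>

definition super_vector_space :: "('k::field \<Rightarrow> 'v::ab_group_add \<Rightarrow> 'v) \<Rightarrow> 'v set \<Rightarrow> 'v set \<Rightarrow> bool" where
  "super_vector_space scale V0 V1 \<longleftrightarrow>
     vector_space scale \<and>
     (\<exists>B. finite B \<and> module.span scale B = UNIV) \<and>
     module.subspace scale V0 \<and> module.subspace scale V1 \<and>
     V0 \<inter> V1 = {0} \<and> (\<forall>x. \<exists>a\<in>V0. \<exists>b\<in>V1. x = a + b)"

definition deg :: "'v set \<Rightarrow> 'v set \<Rightarrow> bool \<Rightarrow> 'v set" where
  "deg V0 V1 \<alpha> = (if \<alpha> then V1 else V0)"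

definition vpart :: "'v::ab_group_add set \<Rightarrow> 'v set \<Rightarrow> bool \<Rightarrow> 'v \<Rightarrow> 'v" where
  "vpart V0 V1 \<alpha> x = (THE y. y \<in> deg V0 V1 \<alpha> \<and> x - y \<in> deg V0 V1 (\<not> \<alpha>))"

definition psign :: "bool \<Rightarrow> bool \<Rightarrow> 'k::field" where
  "psign \<alpha> \<beta> = (if \<alpha> \<and> \<beta> then -1 else 1)"

text \<open>gl(V): linear endomorphisms; degree-alpha part of an endomorphism:
  A_alpha = sum over beta of pi_(alpha+beta) o A o pi_beta.\<close>
definition gl :: "('k::field \<Rightarrow> 'v::ab_group_add \<Rightarrow> 'v) \<Rightarrow> ('v \<Rightarrow> 'v) set" where
  "gl scale = {A. Vector_Spaces.linear scale scale A}"

definition apart :: "'v::ab_group_add set \<Rightarrow> 'v set \<Rightarrow> bool \<Rightarrow> ('v \<Rightarrow> 'v) \<Rightarrow> ('v \<Rightarrow> 'v)" where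
  "apart V0 V1 \<alpha> A = (\<lambda>z. vpart V0 V1 \<alpha> (A (vpart V0 V1 False z))
                        + vpart V0 V1 (\<not> \<alpha>) (A (vpart V0 V1 True z)))"

text \<open>The omni-Lie superalgebra E = gl(V) (+) V: elements are pairs (A, x) standing for A + x.\<close>
type_synonym 'v omni = "('v \<Rightarrow> 'v) \<times> 'v"

definition E :: "('k::field \<Rightarrow> 'v::ab_group_add \<Rightarrow> 'v) \<Rightarrow> 'v omni set" where
  "E scale = {(A, x). A \<in> gl scale}"

definition eadd :: "'v::ab_group_add omni \<Rightarrow> 'v omni \<Rightarrow> 'v omni" where
  "eadd e f = (\<lambda>z. fst e z + fst f z, snd e + snd f)"

definition ezero :: "'v::ab_group_add omni" where
  "ezero = (\<lambda>z. 0, 0)"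

definition escale :: "('k \<Rightarrow> 'v \<Rightarrow> 'v) \<Rightarrow> 'k \<Rightarrow> 'v omni \<Rightarrow> 'v omni" where
  "escale scale c e = (\<lambda>z. scale c (fst e z), scale c (snd e))"

definition epart :: "'v::ab_group_add set \<Rightarrow> 'v set \<Rightarrow> bool \<Rightarrow> 'v omni \<Rightarrow> 'v omni" where
  "epart V0 V1 \<alpha> e = (apart V0 V1 \<alpha> (fst e), vpart V0 V1 \<alpha> (snd e))"

definition hbr :: "('k::field \<Rightarrow> 'v::ab_group_add \<Rightarrow> 'v) \<Rightarrow> bool \<Rightarrow> bool \<Rightarrow> 'v omni \<Rightarrow> 'v omni \<Rightarrow> 'v omni" where
  "hbr scale \<alpha> \<beta> e f =
     (\<lambda>z. fst e (fst f z) - scale (psign \<alpha> \<beta>) (fst f (fst e z)),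
      scale (1/2) (fst e (snd f) - scale (psign \<alpha> \<beta>) (fst f (snd e))))"

definition hpair :: "('k::field \<Rightarrow> 'v::ab_group_add \<Rightarrow> 'v) \<Rightarrow> bool \<Rightarrow> bool \<Rightarrow> 'v omni \<Rightarrow> 'v omni \<Rightarrow> 'v" where
  "hpair scale \<alpha> \<beta> e f = scale (1/2) (fst e (snd f) + scale (psign \<alpha> \<beta>) (fst f (snd e)))"

definition ebr :: "('k::field \<Rightarrow> 'v::ab_group_add \<Rightarrow> 'v) \<Rightarrow> 'v set \<Rightarrow> 'v set \<Rightarrow> 'v omni \<Rightarrow> 'v omni \<Rightarrow> 'v omni" where
  "ebr scale V0 V1 e f =
     eadd (eadd (hbr scale False False (epart V0 V1 False e) (epart V0 V1 False f))
                (hbr scale False True (epart V0 V1 False e) (epart V0 V1 True f)))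
          (eadd (hbr scale True False (epart V0 V1 True e) (epart V0 V1 False f))
                (hbr scale True True (epart V0 V1 True e) (epart V0 V1 True f)))"

definition epair :: "('k::field \<Rightarrow> 'v::ab_group_add \<Rightarrow> 'v) \<Rightarrow> 'v set \<Rightarrow> 'v set \<Rightarrow> 'v omni \<Rightarrow> 'v omni \<Rightarrow> 'v" where
  "epair scale V0 V1 e f =
     hpair scale False False (epart V0 V1 False e) (epart V0 V1 False f)
   + hpair scale False True (epart V0 V1 False e) (epart V0 V1 True f)
   + hpair scale True False (epart V0 V1 True e) (epart V0 V1 False f)
   + hpair scale True True (epart V0 V1 True e) (epart V0 V1 True f)"

definition perp :: "('k::field \<Rightarrow> 'v::ab_group_add \<Rightarrow> 'v) \<Rightarrow> 'v set \<Rightarrow> 'v set \<Rightarrow> 'v omni set \<Rightarrow> 'v omni set" where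
  "perp scale V0 V1 F = {e \<in> E scale. \<forall>f\<in>F. epair scale V0 V1 e f = 0}"

definition graded_subspace_E :: "('k::field \<Rightarrow> 'v::ab_group_add \<Rightarrow> 'v) \<Rightarrow> 'v set \<Rightarrow> 'v set \<Rightarrow> 'v omni set \<Rightarrow> bool" where
  "graded_subspace_E scale V0 V1 L \<longleftrightarrow>
     L \<subseteq> E scale \<and> ezero \<in> L \<and>
     (\<forall>e\<in>L. \<forall>f\<in>L. eadd e f \<in> L) \<and> (\<forall>c. \<forall>e\<in>L. escale scale c e \<in> L) \<and>
     (\<forall>e\<in>L. \<forall>\<alpha>. epart V0 V1 \<alpha> e \<in> L)"

definition dirac :: "('k::field \<Rightarrow> 'v::ab_group_add \<Rightarrow> 'v) \<Rightarrow> 'v set \<Rightarrow> 'v set \<Rightarrow> 'v omni set \<Rightarrow> bool" where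
  "dirac scale V0 V1 L \<longleftrightarrow>
     graded_subspace_E scale V0 V1 L \<and> L = perp scale V0 V1 L \<and>
     (\<forall>e\<in>L. \<forall>f\<in>L. ebr scale V0 V1 e f \<in> L)"

definition graded_subspace_V :: "('k::field \<Rightarrow> 'v::ab_group_add \<Rightarrow> 'v) \<Rightarrow> 'v set \<Rightarrow> 'v set \<Rightarrow> 'v set \<Rightarrow> bool" where
  "graded_subspace_V scale V0 V1 W \<longleftrightarrow>
     module.subspace scale W \<and> (\<forall>x\<in>W. \<forall>\<alpha>. vpart V0 V1 \<alpha> x \<in> W)"

definition lie_superalgebra :: "('k::field \<Rightarrow> 'v::ab_group_add \<Rightarrow> 'v) \<Rightarrow> 'v set \<Rightarrow> 'v set \<Rightarrow> 'v set \<Rightarrow> ('v \<Rightarrow> 'v \<Rightarrow> 'v) \<Rightarrow> bool" where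
  "lie_superalgebra scale V0 V1 W b \<longleftrightarrow>
     graded_subspace_V scale V0 V1 W \<and>
     (\<forall>x\<in>W. \<forall>y\<in>W. b x y \<in> W) \<and>
     (\<forall>x\<in>W. \<forall>x'\<in>W. \<forall>y\<in>W. b (x + x') y = b x y + b x' y \<and> b y (x + x') = b y x + b y x') \<and>
     (\<forall>c. \<forall>x\<in>W. \<forall>y\<in>W. b (scale c x) y = scale c (b x y) \<and> b y (scale c x) = scale c (b y x)) \<and>
     (\<forall>\<alpha> \<beta>. \<forall>x\<in>W \<inter> deg V0 V1 \<alpha>. \<forall>y\<in>W \<inter> deg V0 V1 \<beta>.
        b x y \<in> deg V0 V1 (\<alpha> \<noteq> \<beta>) \<and>
        b x y = - scale (psign \<alpha> \<beta>) (b y x) \<and>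
        (\<forall>z\<in>W. b x (b y z) = b (b x y) z + scale (psign \<alpha> \<beta>) (b y (b x z))))"

text \<open>The set of pairs (W, [,]_W); brackets are normalised to 0 outside W x W so that
  a bracket on W is represented by a unique total function.\<close>
definition lie_pairs :: "('k::field \<Rightarrow> 'v::ab_group_add \<Rightarrow> 'v) \<Rightarrow> 'v set \<Rightarrow> 'v set \<Rightarrow> ('v set \<times> ('v \<Rightarrow> 'v \<Rightarrow> 'v)) set" where
  "lie_pairs scale V0 V1 = {(W, b). lie_superalgebra scale V0 V1 W b \<and>
                               (\<forall>x y. x \<notin> W \<or> y \<notin> W \<longrightarrow> b x y = 0)}"

definition WL :: "'v omni set \<Rightarrow> 'v set" where
  "WL L = {x. \<exists>A. (A, x) \<in> L}"

definition brL :: "'v::zero omni set \<Rightarrow> 'v \<Rightarrow> 'v \<Rightarrow> 'v" where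
  "brL L x y = (if x \<in> WL L \<and> y \<in> WL L then (SOME A. (A, x) \<in> L) y else 0)"

definition dirac_of :: "('k::field \<Rightarrow> 'v::ab_group_add \<Rightarrow> 'v) \<Rightarrow> 'v set \<Rightarrow> ('v \<Rightarrow> 'v \<Rightarrow> 'v) \<Rightarrow> 'v omni set" where
  "dirac_of scale W b = {(A, x). x \<in> W \<and> A \<in> gl scale \<and> (\<forall>y\<in>W. A y = b x y)}"

end

theory Submission
  imports Defs
begin

text \<open>
  Isotropy of a Dirac structure L, evaluated on homogeneous elements A + x and C + y, says
  A(y) = -(-1)^(|x||y|) C(x). For x = 0 this shows that the elements A + 0 of L vanish on W_L,
  so [x,y]_L is well defined; in general the formula is the super skew-symmetry of [,]_L.
  The V-component of [[A + x, C + y]] is then exactly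
  A(y), and closure of L under the bracket becomes the Jacobi identity.
  Conversely, for a Lie superalgebra W the set L_W is isotropic by skew-symmetry and closed
  under the bracket by Jacobi. It is maximal isotropic: if B + z is orthogonal to L_W, pairing
  with A + 0 for endomorphisms A vanishing on W forces z \<in> W, and pairing with homogeneous
  C + y forces B = [z,-] on W. Maximality of L likewise gives L = L_(W_L), so the
  correspondence is bijective.
\<close>

section \<open>Linear endomorphisms\<close>

context vector_space
begin

lemma gl_add_apply: "A \<in> gl scale \<Longrightarrow> A (x + y) = A x + A y"
  and gl_scale_apply: "A \<in> gl scale \<Longrightarrow> A (scale c x) = scale c (A x)"
  unfolding gl_def Vector_Spaces.linear_iff by auto

lemma gl_zero_apply [simp]: "A \<in> gl scale \<Longrightarrow> A 0 = 0"
  using gl_scale_apply[of A 0 0] by simp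

lemma glI:
  "(\<And>x y. A (x + y) = A x + A y) \<Longrightarrow> (\<And>c x. A (scale c x) = scale c (A x)) \<Longrightarrow> A \<in> gl scale"
  unfolding gl_def Vector_Spaces.linear_iff using vector_space_axioms by auto

lemma gl_comp: "A \<in> gl scale \<Longrightarrow> B \<in> gl scale \<Longrightarrow> (\<lambda>z. A (B z)) \<in> gl scale"
  by (rule glI) (simp_all add: gl_add_apply gl_scale_apply)

lemma gl_add: "A \<in> gl scale \<Longrightarrow> B \<in> gl scale \<Longrightarrow> (\<lambda>z. A z + B z) \<in> gl scale"
  by (rule glI) (simp_all add: gl_add_apply gl_scale_apply scale_right_distrib)

lemma gl_diff: "A \<in> gl scale \<Longrightarrow> B \<in> gl scale \<Longrightarrow> (\<lambda>z. A z - B z) \<in> gl scale"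
  by (rule glI) (simp_all add: gl_add_apply gl_scale_apply scale_right_diff_distrib)

lemma gl_scale: "A \<in> gl scale \<Longrightarrow> (\<lambda>z. scale c (A z)) \<in> gl scale"
  by (rule glI) (simp_all add: gl_add_apply gl_scale_apply scale_right_distrib mult.commute)

lemma gl_zero: "(\<lambda>z. 0) \<in> gl scale"
  by (rule glI) simp_all

lemma gl_extension_exists:
  assumes W: "subspace W"
    and f_add: "\<And>x y. x \<in> W \<Longrightarrow> y \<in> W \<Longrightarrow> f (x + y) = f x + f y"
    and f_scale: "\<And>c x. x \<in> W \<Longrightarrow> f (scale c x) = scale c (f x)"
  shows "\<exists>A\<in>gl scale. \<forall>y\<in>W. A y = f y"
proof -
  interpret vp: vector_space_pair scale scale by unfold_locales
  obtain B where B: "B \<subseteq> W" "independent B" "W \<subseteq> span B" by (rule basis_exists)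
  define A where "A = vp.construct B f"
  have A: "A \<in> gl scale" unfolding A_def gl_def using vp.linear_construct[OF B(2)] by simp
  have "f 0 = 0" using f_scale[of 0 0] subspace_0[OF W] by simp
  then have "subspace {y \<in> W. A y = f y}"
    unfolding subspace_def
    using subspace_0[OF W] subspace_add[OF W] subspace_scale[OF W] f_add f_scale
      gl_add_apply[OF A] gl_scale_apply[OF A] gl_zero_apply[OF A]
    by auto
  moreover have "B \<subseteq> {y \<in> W. A y = f y}"
    using B vp.construct_basis[OF B(2)] unfolding A_def by auto
  ultimately have "span B \<subseteq> {y \<in> W. A y = f y}" by (rule span_minimal[rotated])
  then show ?thesis using B(3) A by blast
qed

lemma gl_annihilator_exists:
  assumes W: "subspace W" and z: "z \<notin> W"
  shows "\<exists>A\<in>gl scale. (\<forall>y\<in>W. A y = 0) \<and> A z = z"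
proof -
  interpret vp: vector_space_pair scale scale by unfold_locales
  obtain B where B: "B \<subseteq> W" "independent B" "W \<subseteq> span B" by (rule basis_exists)
  have "span B \<subseteq> W" using span_minimal[OF B(1) W] .
  then have indep: "independent (insert z B)" using independent_insertI[OF _ B(2)] z by blast
  define A where "A = vp.construct (insert z B) (\<lambda>v. if v = z then z else 0)"
  have lin: "Vector_Spaces.linear scale scale A"
    unfolding A_def using vp.linear_construct[OF indep] by simp
  have "A z = z" unfolding A_def using vp.construct_basis[OF indep] by simp
  moreover have "A v = 0" if "v \<in> B" for v
    using vp.construct_basis[OF indep, of v] that B(1) z unfolding A_def by auto
  then have "A y = 0" if "y \<in> W" for y
    using vp.linear_eq_on[OF lin, of "\<lambda>_. 0" y B] gl_zero B(3) that unfolding gl_def by auto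
  ultimately show ?thesis using lin unfolding gl_def by blast
qed

end

lemma dirac_of_iff: "(A, x) \<in> dirac_of scale W b \<longleftrightarrow> x \<in> W \<and> A \<in> gl scale \<and> (\<forall>y\<in>W. A y = b x y)"
  unfolding dirac_of_def by simp

section \<open>Homogeneous components\<close>

locale super_space =
  fixes scale :: "'k::field_char_0 \<Rightarrow> 'v::ab_group_add \<Rightarrow> 'v" and V0 V1 :: "'v set"
  assumes super_vector_space: "super_vector_space scale V0 V1"

sublocale super_space \<subseteq> vs: vector_space scale
  using super_vector_space unfolding super_vector_space_def by auto

context super_space
begin

abbreviation "D \<equiv> deg V0 V1"
abbreviation "P \<equiv> vpart V0 V1"

lemma deg_subspace: "vs.subspace (D a)"
  using super_vector_space unfolding super_vector_space_def deg_def by auto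

lemma deg_zero [simp]: "0 \<in> D a"
  and deg_add: "x \<in> D a \<Longrightarrow> y \<in> D a \<Longrightarrow> x + y \<in> D a"
  and deg_diff: "x \<in> D a \<Longrightarrow> y \<in> D a \<Longrightarrow> x - y \<in> D a"
  and deg_scale: "x \<in> D a \<Longrightarrow> scale c x \<in> D a"
  using deg_subspace vs.subspace_0 vs.subspace_add vs.subspace_diff vs.subspace_scale by blast+

lemma deg_opposite_eq_zero: "x \<in> D a \<Longrightarrow> x \<in> D (\<not> a) \<Longrightarrow> x = 0"
  using super_vector_space unfolding super_vector_space_def deg_def by (cases a) auto

lemma deg_complement_unique:
  assumes "y \<in> D a" "x - y \<in> D (\<not> a)" "y' \<in> D a" "x - y' \<in> D (\<not> a)"
  shows "y = y'"
proof -
  have "y - y' \<in> D a" using assms deg_diff by blast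
  moreover have "(x - y') - (x - y) \<in> D (\<not> a)" using assms deg_diff by blast
  moreover have "(x - y') - (x - y) = y - y'" by simp
  ultimately have "y - y' = 0" using deg_opposite_eq_zero by metis
  then show ?thesis by simp
qed

lemma vpart_spec: "P a x \<in> D a \<and> x - P a x \<in> D (\<not> a)"
proof -
  obtain p q where "p \<in> V0" "q \<in> V1" "x = p + q"
    using super_vector_space unfolding super_vector_space_def by blast
  then have "\<exists>y. y \<in> D a \<and> x - y \<in> D (\<not> a)"
    by (cases a) (auto simp: deg_def)
  then show ?thesis
    unfolding vpart_def using deg_complement_unique by - (rule theI', blast)
qed

lemma vpart_in_deg [simp]: "P a x \<in> D a"
  using vpart_spec by blast

lemma vpart_eqI: "y \<in> D a \<Longrightarrow> x - y \<in> D (\<not> a) \<Longrightarrow> P a x = y"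
  using vpart_spec deg_complement_unique by blast

lemma vpart_of_deg: "x \<in> D b \<Longrightarrow> P a x = (if a = b then x else 0)"
  by (rule vpart_eqI) (auto dest: deg_opposite_eq_zero)

lemma vpart_False_add_True: "P False x + P True x = x"
proof -
  have "P True x = x - P False x"
    using vpart_spec[of False x] by (intro vpart_eqI) auto
  then show ?thesis by simp
qed

lemma vpart_add: "P a (x + y) = P a x + P a y"
proof (rule vpart_eqI)
  have "x + y - (P a x + P a y) = (x - P a x) + (y - P a y)" by (simp add: algebra_simps)
  then show "x + y - (P a x + P a y) \<in> D (\<not> a)" using vpart_spec deg_add by metis
qed (intro deg_add vpart_in_deg)

lemma vpart_scale: "P a (scale c x) = scale c (P a x)"
proof (rule vpart_eqI)
  have "scale c x - scale c (P a x) = scale c (x - P a x)" by (simp add: vs.scale_right_diff_distrib)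
  then show "scale c x - scale c (P a x) \<in> D (\<not> a)" using vpart_spec deg_scale by metis
qed (intro deg_scale vpart_in_deg)

lemma vpart_vpart: "P a (P b x) = (if a = b then P b x else 0)"
  using vpart_of_deg[OF vpart_in_deg] .

lemma vpart_same [simp]: "x \<in> D a \<Longrightarrow> P a x = x"
  and vpart_other [simp]: "x \<in> D a \<Longrightarrow> P (\<not> a) x = 0"
  and vpart_True_of_even [simp]: "x \<in> D False \<Longrightarrow> P True x = 0"
  and vpart_False_of_odd [simp]: "x \<in> D True \<Longrightarrow> P False x = 0"
  by (simp_all add: vpart_of_deg)

lemma gl_vpart: "P a \<in> gl scale"
  by (rule vs.glI) (simp_all add: vpart_add vpart_scale)

definition homogeneous :: "bool \<Rightarrow> ('v \<Rightarrow> 'v) \<Rightarrow> bool" where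
  "homogeneous a A \<longleftrightarrow> (\<forall>b z. z \<in> D b \<longrightarrow> A z \<in> D (a \<noteq> b))"

lemma homogeneousD: "homogeneous a A \<Longrightarrow> z \<in> D b \<Longrightarrow> A z \<in> D (a \<noteq> b)"
  unfolding homogeneous_def by blast

lemma gl_apart: "A \<in> gl scale \<Longrightarrow> apart V0 V1 a A \<in> gl scale"
  unfolding apart_def
  by (rule vs.glI)
     (simp_all add: vs.gl_add_apply vs.gl_scale_apply vpart_add vpart_scale vs.scale_right_distrib
        algebra_simps)

lemma homogeneous_apart: "A \<in> gl scale \<Longrightarrow> homogeneous a (apart V0 V1 a A)"
  unfolding homogeneous_def apart_def
  by (intro allI impI, case_tac b; cases a) simp_all

lemma apart_False_add_True:
  assumes "A \<in> gl scale" shows "apart V0 V1 False A z + apart V0 V1 True A z = A z"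
proof -
  have "A z = A (P False z) + A (P True z)"
    using vs.gl_add_apply[OF assms] vpart_False_add_True by metis
  also have "\<dots> = (P False (A (P False z)) + P True (A (P False z)))
                  + (P False (A (P True z)) + P True (A (P True z)))"
    by (simp only: vpart_False_add_True)
  finally show ?thesis unfolding apart_def by (simp add: algebra_simps)
qed

lemma apart_of_homogeneous:
  assumes A: "A \<in> gl scale" and hom: "homogeneous a A"
  shows "apart V0 V1 a A = A" and "apart V0 V1 (\<not> a) A = (\<lambda>z. 0)"
proof -
  have "apart V0 V1 a A z = A (P False z) + A (P True z)" "apart V0 V1 (\<not> a) A z = 0" for z
  proof -
    have "A (P False z) \<in> D a" "A (P True z) \<in> D (\<not> a)"
      using homogeneousD[OF hom] by (metis vpart_in_deg)+
    then show "apart V0 V1 a A z = A (P False z) + A (P True z)" "apart V0 V1 (\<not> a) A z = 0"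
      unfolding apart_def by (cases a; simp)+
  qed
  then show "apart V0 V1 a A = A" "apart V0 V1 (\<not> a) A = (\<lambda>z. 0)"
    by (simp_all add: vs.gl_add_apply[OF A, symmetric] vpart_False_add_True fun_eq_iff)
qed

lemma scale_psign: "scale (psign a b) v = (if a \<and> b then - v else v)"
  by (simp add: psign_def vs.scale_minus_left)

lemma psign_commute: "psign a b = psign b a"
  by (auto simp: psign_def)

lemma scale_half_double: "scale (1/2) (v + v) = v"
proof -
  have "v + v = scale 2 v" by (metis one_add_one vs.scale_left_distrib vs.scale_one)
  then show ?thesis by simp
qed

lemma apart_decompose:
  assumes "A \<in> gl scale"
  shows "A y = apart V0 V1 False A (P False y) + apart V0 V1 False A (P True y)
            + (apart V0 V1 True A (P False y) + apart V0 V1 True A (P True y))"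
proof -
  have "apart V0 V1 a A y = apart V0 V1 a A (P False y) + apart V0 V1 a A (P True y)" for a
    using vs.gl_add_apply[OF gl_apart[OF assms]] by (metis vpart_False_add_True)
  then show ?thesis using apart_False_add_True[OF assms, of y] by simp
qed

lemma epair_expand:
  "epair scale V0 V1 (B, z) (C, y) = scale (1/2)
     ((apart V0 V1 False B (P False y) + scale (psign False False) (apart V0 V1 False C (P False z)))
    + (apart V0 V1 False B (P True y) + scale (psign False True) (apart V0 V1 True C (P False z)))
    + (apart V0 V1 True B (P False y) + scale (psign True False) (apart V0 V1 False C (P True z)))
    + (apart V0 V1 True B (P True y) + scale (psign True True) (apart V0 V1 True C (P True z))))"
  by (simp add: epair_def epart_def hpair_def vs.scale_right_distrib)

lemma epair_zero_left:
  assumes "B \<in> gl scale" and "C \<in> gl scale"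
  shows "epair scale V0 V1 (B, 0) (C, y) = scale (1/2) (B y)"
  unfolding epair_expand using apart_decompose[OF assms(1), of y] gl_apart[OF assms(2)]
  by (simp add: algebra_simps)

lemma epair_homogeneous_right:
  assumes B: "B \<in> gl scale" and C: "C \<in> gl scale" "homogeneous b C" and y: "y \<in> D b"
  shows "epair scale V0 V1 (B, z) (C, y) = scale (1/2)
     (B y + scale (psign False b) (C (P False z)) + scale (psign True b) (C (P True z)))"
proof -
  have "B y = apart V0 V1 False B y + apart V0 V1 True B y"
    using apart_False_add_True[OF B] by simp
  moreover have "apart V0 V1 b C = C" "apart V0 V1 (\<not> b) C = (\<lambda>z. 0)"
    using apart_of_homogeneous[OF C] by auto
  ultimately show ?thesis
    unfolding epair_expand using y gl_apart[OF B] by (cases b) (simp_all add: algebra_simps)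
qed

lemma epair_homogeneous:
  assumes "B \<in> gl scale" "homogeneous a B" "z \<in> D a"
    and "C \<in> gl scale" "homogeneous b C" "y \<in> D b"
  shows "epair scale V0 V1 (B, z) (C, y) = scale (1/2) (B y + scale (psign a b) (C z))"
  using epair_homogeneous_right[of B C b y z] assms by (cases a) simp_all

lemma ebr_homogeneous:
  assumes A: "A \<in> gl scale" "homogeneous a A" and x: "x \<in> D a"
    and C: "C \<in> gl scale" "homogeneous b C" and y: "y \<in> D b"
  shows "ebr scale V0 V1 (A, x) (C, y) = hbr scale a b (A, x) (C, y)"
  using apart_of_homogeneous[OF A] apart_of_homogeneous[OF C] x y A C
  by (cases a; cases b) (simp_all add: ebr_def epart_def hbr_def eadd_def)

section \<open>From Dirac structures to Lie superalgebras\<close>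

context
  fixes L assumes dirac: "dirac scale V0 V1 L"
begin

lemma dirac_graded: "graded_subspace_E scale V0 V1 L"
  and dirac_perp: "L = perp scale V0 V1 L"
  and dirac_ebr: "e \<in> L \<Longrightarrow> f \<in> L \<Longrightarrow> ebr scale V0 V1 e f \<in> L"
  using dirac unfolding dirac_def by blast+

lemma dirac_gl: "(A, x) \<in> L \<Longrightarrow> A \<in> gl scale"
  using dirac_graded unfolding graded_subspace_E_def E_def by blast

lemma dirac_add:
  assumes "(A, x) \<in> L" "(A', x') \<in> L" shows "(\<lambda>z. A z + A' z, x + x') \<in> L"
proof -
  have "eadd (A, x) (A', x') \<in> L"
    using dirac_graded assms unfolding graded_subspace_E_def by blast
  then show ?thesis by (simp add: eadd_def)
qed

lemma dirac_scale: "(A, x) \<in> L \<Longrightarrow> (\<lambda>z. scale c (A z), scale c x) \<in> L"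
proof -
  assume "(A, x) \<in> L"
  then have "escale scale c (A, x) \<in> L"
    using dirac_graded unfolding graded_subspace_E_def by blast
  then show ?thesis by (simp add: escale_def)
qed

lemma dirac_diff: "(A, x) \<in> L \<Longrightarrow> (A', x') \<in> L \<Longrightarrow> (\<lambda>z. A z - A' z, x - x') \<in> L"
  using dirac_add[OF _ dirac_scale[of A' x' "-1"], of A x] by (simp add: vs.scale_minus_left)

lemma dirac_apart: "(A, x) \<in> L \<Longrightarrow> (apart V0 V1 a A, P a x) \<in> L"
proof -
  assume "(A, x) \<in> L"
  then have "epart V0 V1 a (A, x) \<in> L"
    using dirac_graded unfolding graded_subspace_E_def by blast
  then show ?thesis by (simp add: epart_def)
qed

lemma dirac_isotropic: "e \<in> L \<Longrightarrow> f \<in> L \<Longrightarrow> epair scale V0 V1 e f = 0"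
  using dirac_perp unfolding perp_def by blast

lemma dirac_maximal:
  "A \<in> gl scale \<Longrightarrow> (\<And>f. f \<in> L \<Longrightarrow> epair scale V0 V1 (A, x) f = 0) \<Longrightarrow> (A, x) \<in> L"
  using dirac_perp unfolding perp_def E_def by blast

lemma dirac_kernel_annihilates: "(A, 0) \<in> L \<Longrightarrow> (B, y) \<in> L \<Longrightarrow> A y = 0"
  using dirac_isotropic[of "(A, 0)" "(B, y)"] epair_zero_left[of A B y] dirac_gl by simp

lemma dirac_well_defined: "(A, x) \<in> L \<Longrightarrow> (A', x) \<in> L \<Longrightarrow> y \<in> WL L \<Longrightarrow> A y = A' y"
  using dirac_kernel_annihilates[of "\<lambda>z. A z - A' z"] dirac_diff[of A x A' x]
  unfolding WL_def by fastforce

lemma brL_eq: "(A, x) \<in> L \<Longrightarrow> y \<in> WL L \<Longrightarrow> brL L x y = A y"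
  unfolding brL_def WL_def
  by (auto intro: someI2[where P = "\<lambda>A. (A, x) \<in> L"] dirac_well_defined[unfolded WL_def])

lemma WL_vpart: "x \<in> WL L \<Longrightarrow> P a x \<in> WL L"
  and WL_add: "x \<in> WL L \<Longrightarrow> y \<in> WL L \<Longrightarrow> x + y \<in> WL L"
  and WL_scale: "x \<in> WL L \<Longrightarrow> scale c x \<in> WL L"
  unfolding WL_def using dirac_apart dirac_add dirac_scale by blast+

lemma WL_subspace: "vs.subspace (WL L)"
proof -
  have "(\<lambda>z. 0, 0) \<in> L"
    using dirac_graded unfolding graded_subspace_E_def ezero_def by blast
  then have "0 \<in> WL L" unfolding WL_def by blast
  then show ?thesis unfolding vs.subspace_def using WL_add WL_scale by blast
qed

lemma dirac_skew:
  assumes "(A, x) \<in> L" "homogeneous a A" "x \<in> D a" "(C, y) \<in> L" "homogeneous b C" "y \<in> D b"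
  shows "A y = - scale (psign a b) (C x)"
proof -
  have "scale (1/2) (A y + scale (psign a b) (C x)) = 0"
    using dirac_isotropic[OF assms(1,4)] epair_homogeneous[of A a x C b y] assms dirac_gl by simp
  then show ?thesis by (simp add: eq_neg_iff_add_eq_0)
qed

lemma dirac_hbr:
  assumes "(A, x) \<in> L" "homogeneous a A" "x \<in> D a" "(C, y) \<in> L" "homogeneous b C" "y \<in> D b"
  shows "(\<lambda>z. A (C z) - scale (psign a b) (C (A z)), A y) \<in> L"
proof -
  have "hbr scale a b (A, x) (C, y) \<in> L"
    using dirac_ebr[OF assms(1,4)] ebr_homogeneous[of A a x C b y] assms dirac_gl by simp
  moreover have "scale (psign a b) (C x) = - A y"
    using dirac_skew[of C y b A x a] assms by (simp add: psign_commute scale_psign)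
  ultimately show ?thesis unfolding hbr_def by (simp add: scale_half_double)
qed

lemma dirac_homogeneous_representative:
  assumes "x \<in> WL L" "x \<in> D a"
  obtains A where "(A, x) \<in> L" "homogeneous a A"
proof -
  obtain A where A: "(A, x) \<in> L" using assms(1) unfolding WL_def by blast
  show ?thesis
    using that[of "apart V0 V1 a A"] dirac_apart[OF A, of a] homogeneous_apart[OF dirac_gl[OF A]]
      assms(2) by simp
qed

lemma brL_closed: assumes x: "x \<in> WL L" and y: "y \<in> WL L" shows "brL L x y \<in> WL L"
proof -
  obtain A C where A: "(A, x) \<in> L" and C: "(C, y) \<in> L" using x y unfolding WL_def by auto
  have "apart V0 V1 a A (P b y) \<in> WL L" for a b
    using dirac_hbr[OF dirac_apart[OF A, of a] homogeneous_apart[OF dirac_gl[OF A]] vpart_in_deg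
        dirac_apart[OF C, of b] homogeneous_apart[OF dirac_gl[OF C]] vpart_in_deg]
    unfolding WL_def by blast
  then show ?thesis
    using brL_eq[OF A y] apart_decompose[OF dirac_gl[OF A], of y] WL_add by metis
qed

context
  fixes x y a b
  assumes x: "x \<in> WL L" "x \<in> D a" and y: "y \<in> WL L" "y \<in> D b"
begin

lemma brL_deg: "brL L x y \<in> D (a \<noteq> b)"
proof -
  obtain A where A: "(A, x) \<in> L" "homogeneous a A" using dirac_homogeneous_representative x .
  then show ?thesis using brL_eq[OF A(1) y(1)] homogeneousD[OF A(2) y(2)] by simp
qed

lemma brL_skew: "brL L x y = - scale (psign a b) (brL L y x)"
proof -
  obtain A where A: "(A, x) \<in> L" "homogeneous a A" using dirac_homogeneous_representative x .
  obtain C where C: "(C, y) \<in> L" "homogeneous b C" using dirac_homogeneous_representative y .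
  show ?thesis using dirac_skew[OF A x(2) C y(2)] brL_eq[OF A(1) y(1)] brL_eq[OF C(1) x(1)] by simp
qed

lemma brL_jacobi:
  assumes z: "z \<in> WL L"
  shows "brL L x (brL L y z) = brL L (brL L x y) z + scale (psign a b) (brL L y (brL L x z))"
proof -
  obtain A where A: "(A, x) \<in> L" "homogeneous a A" using dirac_homogeneous_representative x .
  obtain C where C: "(C, y) \<in> L" "homogeneous b C" using dirac_homogeneous_representative y .
  have "brL L (brL L x y) z = A (C z) - scale (psign a b) (C (A z))"
    using brL_eq[OF dirac_hbr[OF A x(2) C y(2)] z] brL_eq[OF A(1) y(1)] by simp
  moreover have "brL L x (brL L y z) = A (C z)"
    using brL_eq[OF C(1) z] brL_eq[OF A(1) brL_closed[OF y(1) z]] by simp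
  moreover have "brL L y (brL L x z) = C (A z)"
    using brL_eq[OF A(1) z] brL_eq[OF C(1) brL_closed[OF x(1) z]] by simp
  ultimately show ?thesis by simp
qed

end

lemma dirac_lie_superalgebra: "lie_superalgebra scale V0 V1 (WL L) (brL L)"
  unfolding lie_superalgebra_def graded_subspace_V_def
proof (intro conjI ballI allI)
  show "vs.subspace (WL L)" by (rule WL_subspace)
  show "P a x \<in> WL L" if "x \<in> WL L" for x a using WL_vpart that .
  show "brL L x y \<in> WL L" if "x \<in> WL L" "y \<in> WL L" for x y using brL_closed that .
next
  fix x x' y c assume x: "x \<in> WL L" and x': "x' \<in> WL L" and y: "y \<in> WL L"
  obtain A A' C where A: "(A, x) \<in> L" and A': "(A', x') \<in> L" and C: "(C, y) \<in> L"
    using x x' y unfolding WL_def by auto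
  show "brL L (x + x') y = brL L x y + brL L x' y"
    using brL_eq[OF dirac_add[OF A A'] y] brL_eq[OF A y] brL_eq[OF A' y] by simp
  show "brL L (scale c x) y = scale c (brL L x y)"
    using brL_eq[OF dirac_scale[OF A] y] brL_eq[OF A y] by simp
  show "brL L y (x + x') = brL L y x + brL L y x'"
    using brL_eq[OF C WL_add[OF x x']] brL_eq[OF C x] brL_eq[OF C x'] vs.gl_add_apply[OF dirac_gl[OF C]]
    by simp
  show "brL L y (scale c x) = scale c (brL L y x)"
    using brL_eq[OF C WL_scale[OF x]] brL_eq[OF C x] vs.gl_scale_apply[OF dirac_gl[OF C]] by simp
next
  fix a b x y assume "x \<in> WL L \<inter> D a" "y \<in> WL L \<inter> D b"
  then have x: "x \<in> WL L" "x \<in> D a" and y: "y \<in> WL L" "y \<in> D b" by auto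
  show "brL L x y \<in> D (a \<noteq> b)" using brL_deg[OF x y] .
  show "brL L x y = - scale (psign a b) (brL L y x)" using brL_skew[OF x y] .
  show "brL L x (brL L y z) = brL L (brL L x y) z + scale (psign a b) (brL L y (brL L x z))"
    if "z \<in> WL L" for z using brL_jacobi[OF x y that] .
qed

lemma dirac_of_WL_brL: "dirac_of scale (WL L) (brL L) = L"
proof (intro set_eqI iffI)
  fix e assume e: "e \<in> dirac_of scale (WL L) (brL L)"
  then obtain A x where ex: "e = (A, x)" and x: "x \<in> WL L" and A: "A \<in> gl scale"
    and A_brL: "\<And>y. y \<in> WL L \<Longrightarrow> A y = brL L x y"
    unfolding dirac_of_def by auto
  obtain A' where A': "(A', x) \<in> L" using x unfolding WL_def by auto
  have A_diff: "(\<lambda>z. A z - A' z) \<in> gl scale" using vs.gl_diff[OF A dirac_gl[OF A']] .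
  have "(\<lambda>z. A z - A' z, 0) \<in> L"
  proof (rule dirac_maximal[OF A_diff])
    fix f assume f: "f \<in> L"
    obtain B y where fy: "f = (B, y)" by (cases f)
    have "y \<in> WL L" using f unfolding fy WL_def by auto
    then have "A y - A' y = 0" using A_brL brL_eq[OF A'] by simp
    then show "epair scale V0 V1 (\<lambda>z. A z - A' z, 0) f = 0"
      unfolding fy using epair_zero_left[OF A_diff dirac_gl[OF f[unfolded fy]], of y] by simp
  qed
  from dirac_add[OF this A'] show "e \<in> L" unfolding ex by simp
next
  fix e assume "e \<in> L"
  then show "e \<in> dirac_of scale (WL L) (brL L)"
    using brL_eq dirac_gl unfolding dirac_of_def WL_def by (cases e) auto
qed

lemma dirac_lie_pair: "(WL L, brL L) \<in> lie_pairs scale V0 V1"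
  unfolding lie_pairs_def using dirac_lie_superalgebra by (auto simp: brL_def)

end

section \<open>From Lie superalgebras to Dirac structures\<close>

context
  fixes W b assumes lie: "lie_superalgebra scale V0 V1 W b"
begin

lemma lie_subspace: "vs.subspace W"
  and lie_vpart: "x \<in> W \<Longrightarrow> P a x \<in> W"
  and lie_closed: "x \<in> W \<Longrightarrow> y \<in> W \<Longrightarrow> b x y \<in> W"
  using lie unfolding lie_superalgebra_def graded_subspace_V_def by blast+

lemma lie_add_left: "x \<in> W \<Longrightarrow> x' \<in> W \<Longrightarrow> y \<in> W \<Longrightarrow> b (x + x') y = b x y + b x' y"
  and lie_add_right: "x \<in> W \<Longrightarrow> x' \<in> W \<Longrightarrow> y \<in> W \<Longrightarrow> b y (x + x') = b y x + b y x'"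
  and lie_scale_left: "x \<in> W \<Longrightarrow> y \<in> W \<Longrightarrow> b (scale c x) y = scale c (b x y)"
  and lie_scale_right: "x \<in> W \<Longrightarrow> y \<in> W \<Longrightarrow> b y (scale c x) = scale c (b y x)"
  using lie unfolding lie_superalgebra_def by blast+

lemma lie_deg: "x \<in> W \<Longrightarrow> x \<in> D a \<Longrightarrow> y \<in> W \<Longrightarrow> y \<in> D c \<Longrightarrow> b x y \<in> D (a \<noteq> c)"
  and lie_skew: "x \<in> W \<Longrightarrow> x \<in> D a \<Longrightarrow> y \<in> W \<Longrightarrow> y \<in> D c \<Longrightarrow> b x y = - scale (psign a c) (b y x)"
  and lie_jacobi: "x \<in> W \<Longrightarrow> x \<in> D a \<Longrightarrow> y \<in> W \<Longrightarrow> y \<in> D c \<Longrightarrow> z \<in> W \<Longrightarrow>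
    b x (b y z) = b (b x y) z + scale (psign a c) (b y (b x z))"
  using lie unfolding lie_superalgebra_def by blast+

lemma lie_zero_left: "y \<in> W \<Longrightarrow> b 0 y = 0"
  using lie_add_left[of 0 0 y] vs.subspace_0[OF lie_subspace] by simp

lemma lie_vpart_split_left: "x \<in> W \<Longrightarrow> y \<in> W \<Longrightarrow> b x y = b (P False x) y + b (P True x) y"
  using lie_add_left[OF lie_vpart lie_vpart, of x x y False True] vpart_False_add_True by simp

lemma lie_vpart_split_right: "x \<in> W \<Longrightarrow> y \<in> W \<Longrightarrow> b x y = b x (P False y) + b x (P True y)"
  using lie_add_right[OF lie_vpart lie_vpart, of y y x False True] vpart_False_add_True by simp

lemma vpart_lie:
  assumes "x \<in> W" "y \<in> W" "y \<in> D c"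
  shows "P a (b x y) = b (P (a \<noteq> c) x) y"
proof -
  have "P a (b (P d x) y) = (if a = (d \<noteq> c) then b (P d x) y else 0)" for d
    using vpart_of_deg lie_deg[OF lie_vpart[OF assms(1)] vpart_in_deg assms(2,3)] by blast
  then show ?thesis
    using lie_vpart_split_left[OF assms(1,2)] vpart_add by (cases a; cases c) simp_all
qed

abbreviation "LW \<equiv> dirac_of scale W b"

lemma dirac_of_exists: "x \<in> W \<Longrightarrow> \<exists>A. (A, x) \<in> LW"
  using vs.gl_extension_exists[OF lie_subspace, of "b x"] lie_add_right lie_scale_right
  unfolding dirac_of_iff by blast

lemma dirac_of_apart:
  assumes "(A, x) \<in> LW" "y \<in> W"
  shows "apart V0 V1 a A y = b (P a x) y"
proof -
  have x: "x \<in> W" and A: "\<And>y. y \<in> W \<Longrightarrow> A y = b x y"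
    using assms(1) by (auto simp: dirac_of_iff)
  have "apart V0 V1 a A y = P a (b x (P False y)) + P (\<not> a) (b x (P True y))"
    unfolding apart_def using A lie_vpart assms(2) by simp
  also have "\<dots> = b (P a x) (P False y) + b (P a x) (P True y)"
    using vpart_lie[OF x lie_vpart[OF assms(2)] vpart_in_deg] by simp
  also have "\<dots> = b (P a x) y"
    using lie_vpart_split_right[OF lie_vpart[OF x] assms(2)] by simp
  finally show ?thesis .
qed

lemma dirac_of_apart_mem: "(A, x) \<in> LW \<Longrightarrow> (apart V0 V1 a A, P a x) \<in> LW"
  using dirac_of_apart[of A x _ a] lie_vpart gl_apart unfolding dirac_of_iff by auto

lemma dirac_of_homogeneous_exists:
  assumes "y \<in> W" "y \<in> D c"
  obtains C where "(C, y) \<in> LW" "C \<in> gl scale" "homogeneous c C"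
proof -
  obtain C where "(C, y) \<in> LW" using dirac_of_exists assms(1) by blast
  then show ?thesis
    using that[of "apart V0 V1 c C"] dirac_of_apart_mem[of C y c] gl_apart homogeneous_apart assms(2)
    unfolding dirac_of_iff by auto
qed

lemma dirac_of_hbr:
  assumes A: "(A, x) \<in> LW" and x: "x \<in> D a" and C: "(C, y) \<in> LW" and y: "y \<in> D c"
  shows "hbr scale a c (A, x) (C, y) \<in> LW"
proof -
  have xW: "x \<in> W" and Ag: "A \<in> gl scale" and Ab: "\<And>w. w \<in> W \<Longrightarrow> A w = b x w"
    and yW: "y \<in> W" and Cg: "C \<in> gl scale" and Cb: "\<And>w. w \<in> W \<Longrightarrow> C w = b y w"
    using A C by (auto simp: dirac_of_iff)
  have "scale (psign a c) (C x) = - b x y"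
    using Cb[OF xW] lie_skew[OF yW y xW x] by (simp add: psign_commute scale_psign)
  then have "scale (1/2) (A y - scale (psign a c) (C x)) = b x y"
    using scale_half_double Ab[OF yW] by simp
  moreover have "(\<lambda>z. A (C z) - scale (psign a c) (C (A z))) \<in> gl scale"
    using vs.gl_diff[OF vs.gl_comp[OF Ag Cg] vs.gl_scale[OF vs.gl_comp[OF Cg Ag]]] .
  moreover have "A (C w) - scale (psign a c) (C (A w)) = b (b x y) w" if "w \<in> W" for w
    using Ab[OF lie_closed[OF yW that]] Cb[OF lie_closed[OF xW that]] Cb[OF that] Ab[OF that]
      lie_jacobi[OF xW x yW y that] by simp
  ultimately show ?thesis unfolding hbr_def dirac_of_iff using lie_closed[OF xW yW] by simp
qed

lemma dirac_of_add: "e \<in> LW \<Longrightarrow> f \<in> LW \<Longrightarrow> eadd e f \<in> LW"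
  using vs.subspace_add[OF lie_subspace] vs.gl_add lie_add_left
  unfolding dirac_of_def eadd_def by auto

lemma dirac_of_ebr: "e \<in> LW \<Longrightarrow> f \<in> LW \<Longrightarrow> ebr scale V0 V1 e f \<in> LW"
  unfolding ebr_def epart_def
  by (cases e, cases f) (intro dirac_of_add dirac_of_hbr dirac_of_apart_mem vpart_in_deg; simp)

lemma dirac_of_isotropic:
  assumes e: "(B, z) \<in> LW" and f: "(C, y) \<in> LW"
  shows "epair scale V0 V1 (B, z) (C, y) = 0"
proof -
  have zW: "z \<in> W" and yW: "y \<in> W" using e f by (auto simp: dirac_of_iff)
  have "apart V0 V1 a B (P c y) + scale (psign a c) (apart V0 V1 c C (P a z)) = 0" for a c
    using dirac_of_apart[OF e lie_vpart[OF yW]] dirac_of_apart[OF f lie_vpart[OF zW]]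
      lie_skew[OF lie_vpart[OF yW] vpart_in_deg lie_vpart[OF zW] vpart_in_deg]
    by (simp add: psign_commute scale_psign)
  then show ?thesis unfolding epair_expand by simp
qed

context
  fixes B z assumes perp: "(B, z) \<in> perp scale V0 V1 LW"
begin

lemma perp_dirac_of_gl: "B \<in> gl scale"
  using perp unfolding perp_def E_def by auto

lemma perp_dirac_of_orthogonal: "f \<in> LW \<Longrightarrow> epair scale V0 V1 (B, z) f = 0"
  using perp unfolding perp_def by auto

text \<open>If a component \<open>P a z\<close> were outside \<open>W\<close>, an even endomorphism vanishing on \<open>W\<close>
  and fixing \<open>P a z\<close> would pair nontrivially with \<open>B + z\<close>.\<close>

lemma perp_dirac_of_vpart_mem: "P a z \<in> W"
proof (rule ccontr)
  assume z_notin: "P a z \<notin> W"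
  then obtain A' where A': "A' \<in> gl scale" "\<And>y. y \<in> W \<Longrightarrow> A' y = 0" "A' (P a z) = P a z"
    using vs.gl_annihilator_exists[OF lie_subspace] by blast
  define A where "A = (\<lambda>v. P a (A' (P a v)))"
  have A_gl: "A \<in> gl scale"
    unfolding A_def using vs.gl_comp[OF gl_vpart vs.gl_comp[OF A'(1) gl_vpart]] .
  have A_even: "homogeneous False A"
    unfolding homogeneous_def A_def by (auto simp: vpart_of_deg vs.gl_zero_apply[OF A'(1)])
  have "(A, 0) \<in> LW"
    unfolding dirac_of_iff A_def
    using vs.subspace_0[OF lie_subspace] A_gl A'(2) lie_vpart lie_zero_left unfolding A_def by simp
  then have "A (P False z) + A (P True z) = 0"
    using perp_dirac_of_orthogonal epair_homogeneous_right[OF perp_dirac_of_gl A_gl A_even deg_zero, of z]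
      perp_dirac_of_gl
    by (simp add: psign_def)
  moreover have "A (P False z) + A (P True z) = P a z"
    using A' by (cases a) (simp_all add: A_def vpart_vpart)
  ultimately show False using z_notin vs.subspace_0[OF lie_subspace] by simp
qed

lemma perp_dirac_of_mem: "z \<in> W"
  using vs.subspace_add[OF lie_subspace perp_dirac_of_vpart_mem perp_dirac_of_vpart_mem]
    vpart_False_add_True by metis

lemma perp_dirac_of_apply_homogeneous:
  assumes y: "y \<in> W" "y \<in> D c"
  shows "B y = b z y"
proof -
  obtain C where C: "(C, y) \<in> LW" "C \<in> gl scale" "homogeneous c C"
    using dirac_of_homogeneous_exists y .
  have "scale (psign d c) (C (P d z)) = - b (P d z) y" for d
    using C(1) lie_skew[OF y lie_vpart[OF perp_dirac_of_mem] vpart_in_deg]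
      lie_vpart[OF perp_dirac_of_mem]
    unfolding dirac_of_iff by (simp add: psign_commute scale_psign)
  moreover have "B y + scale (psign False c) (C (P False z)) + scale (psign True c) (C (P True z)) = 0"
    using perp_dirac_of_orthogonal[OF C(1)] epair_homogeneous_right[OF perp_dirac_of_gl C(2,3) y(2)]
    by simp
  ultimately show ?thesis
    using lie_vpart_split_left[OF perp_dirac_of_mem y(1)] by (simp add: algebra_simps)
qed

lemma perp_dirac_of_apply: "y \<in> W \<Longrightarrow> B y = b z y"
  using vs.gl_add_apply[OF perp_dirac_of_gl] vpart_False_add_True
    perp_dirac_of_apply_homogeneous[OF lie_vpart vpart_in_deg]
    lie_vpart_split_right[OF perp_dirac_of_mem]
  by metis

end

lemma dirac_of_eq_perp: "LW = perp scale V0 V1 LW"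
proof (intro set_eqI iffI)
  fix e assume "e \<in> LW"
  moreover obtain B z where "e = (B, z)" by (cases e)
  ultimately show "e \<in> perp scale V0 V1 LW"
    unfolding perp_def E_def using dirac_of_isotropic by (auto simp: dirac_of_iff)
next
  fix e assume "e \<in> perp scale V0 V1 LW"
  moreover obtain B z where "e = (B, z)" by (cases e)
  ultimately show "e \<in> LW"
    using perp_dirac_of_mem perp_dirac_of_gl perp_dirac_of_apply by (simp add: dirac_of_iff)
qed

lemma dirac_of_dirac: "dirac scale V0 V1 LW"
  unfolding dirac_def graded_subspace_E_def
proof (intro conjI ballI allI)
  show "LW \<subseteq> E scale" unfolding dirac_of_def E_def by auto
  show "ezero \<in> LW"
    unfolding ezero_def dirac_of_iff
    using vs.subspace_0[OF lie_subspace] vs.gl_zero lie_zero_left by simp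
  show "escale scale c e \<in> LW" if "e \<in> LW" for c e
    using that vs.subspace_scale[OF lie_subspace] vs.gl_scale lie_scale_left
    unfolding escale_def dirac_of_def by auto
  show "epart V0 V1 a e \<in> LW" if "e \<in> LW" for a e
    using that dirac_of_apart_mem unfolding epart_def by (cases e) simp
  show "eadd e f \<in> LW" if "e \<in> LW" "f \<in> LW" for e f
    using dirac_of_add that .
  show "ebr scale V0 V1 e f \<in> LW" if "e \<in> LW" "f \<in> LW" for e f
    using dirac_of_ebr that .
qed (rule dirac_of_eq_perp)

lemma WL_dirac_of: "WL LW = W"
  using dirac_of_exists unfolding WL_def dirac_of_def by auto

lemma brL_dirac_of:
  assumes "\<forall>x y. x \<notin> W \<or> y \<notin> W \<longrightarrow> b x y = 0"
  shows "brL LW = b"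
proof (intro ext)
  fix x y
  show "brL LW x y = b x y"
  proof (cases "x \<in> W \<and> y \<in> W")
    case True
    then obtain A where "(A, x) \<in> LW" using dirac_of_exists by blast
    then have "(SOME A. (A, x) \<in> LW, x) \<in> LW" by (rule someI[where P = "\<lambda>A. (A, x) \<in> LW"])
    then show ?thesis using True WL_dirac_of unfolding brL_def dirac_of_iff by auto
  qed (use assms WL_dirac_of in \<open>auto simp: brL_def\<close>)
qed

end

end

context super_space
begin

lemma lie_pair_dirac_of:
  assumes "(W, b) \<in> lie_pairs scale V0 V1"
  shows "dirac scale V0 V1 (dirac_of scale W b)"
    and "(WL (dirac_of scale W b), brL (dirac_of scale W b)) = (W, b)"
  using assms dirac_of_dirac WL_dirac_of brL_dirac_of unfolding lie_pairs_def by auto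

lemma bij_betw_dirac_lie_pairs:
  "bij_betw (\<lambda>L. (WL L, brL L)) {L. dirac scale V0 V1 L} (lie_pairs scale V0 V1)"
proof (rule bij_betw_byWitness[where f' = "\<lambda>(W, b). dirac_of scale W b"])
  show "\<forall>L\<in>{L. dirac scale V0 V1 L}. (\<lambda>(W, b). dirac_of scale W b) (WL L, brL L) = L"
    by (simp add: dirac_of_WL_brL)
  show "\<forall>p\<in>lie_pairs scale V0 V1. (\<lambda>L. (WL L, brL L)) ((\<lambda>(W, b). dirac_of scale W b) p) = p"
    using lie_pair_dirac_of(2) by auto
  show "(\<lambda>L. (WL L, brL L)) ` {L. dirac scale V0 V1 L} \<subseteq> lie_pairs scale V0 V1"
    using dirac_lie_pair by blast
  show "(\<lambda>(W, b). dirac_of scale W b) ` lie_pairs scale V0 V1 \<subseteq> {L. dirac scale V0 V1 L}"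
    using lie_pair_dirac_of(1) by auto
qed

end

theorem mainTheorem6:
  fixes scale :: "'k::field_char_0 \<Rightarrow> 'v::ab_group_add \<Rightarrow> 'v"
    and V0 V1 :: "'v set"
  assumes "super_vector_space scale V0 V1"
  shows "(\<forall>L. dirac scale V0 V1 L \<longrightarrow>
            (\<forall>x\<in>WL L. \<forall>A A'. (A, x) \<in> L \<and> (A', x) \<in> L \<longrightarrow> (\<forall>y\<in>WL L. A y = A' y)) \<and>
            (\<forall>x\<in>WL L. \<forall>y\<in>WL L. brL L x y \<in> WL L) \<and>
            lie_superalgebra scale V0 V1 (WL L) (brL L))
       \<and> bij_betw (\<lambda>L. (WL L, brL L)) {L. dirac scale V0 V1 L} (lie_pairs scale V0 V1)
       \<and> (\<forall>W b. (W, b) \<in> lie_pairs scale V0 V1 \<longrightarrow>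
            dirac scale V0 V1 (dirac_of scale W b) \<and>
            (WL (dirac_of scale W b), brL (dirac_of scale W b)) = (W, b))"
proof -
  interpret super_space scale V0 V1 by unfold_locales (rule assms)
  show ?thesis
  proof (intro conjI allI impI ballI)
    fix L assume L: "dirac scale V0 V1 L"
    show "A y = A' y" if "x \<in> WL L" "(A, x) \<in> L \<and> (A', x) \<in> L" "y \<in> WL L" for x A A' y
      using dirac_well_defined[OF L] that by blast
    show "brL L x y \<in> WL L" if "x \<in> WL L" "y \<in> WL L" for x y
      using brL_closed[OF L that] .
    show "lie_superalgebra scale V0 V1 (WL L) (brL L)"
      using dirac_lie_superalgebra[OF L] .
  qed (use bij_betw_dirac_lie_pairs lie_pair_dirac_of in simp_all)
qed

end
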